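(* Let $n\ge 2$ and let $G=K_{1,n}$ be a star whose edges have weights $p_1\le p_2\le\dots\le p_n$ in $(0,1)$, and let $\alpha\in(0,1)$. Put $P=\prod_{j=1}^{n-1}(1-p_j)$ and assume $P\ne 1-p_n$. Then $\operatorname{cptw}(G,\alpha)$ is the minimum positive integer $m$ such that \[p_n(1-P)\cdot\frac{\dfrac{1-P^m}{1-P}-\dfrac{1-(1-p_n)^m}{p_n}}{P-(1-p_n)}\ \ge\ \alpha.\]
   Context: Let $G$ be a finite simple graph in which each edge $uv$ has a weight $w_{uv}\in(0,1)$. Weighted zero forcing: start with a set $B\subseteq V(G)$ of blue vertices, all other vertices white. In each round, simultaneously, for every blue vertex $u$ that has exactly one white neighbor $v$ (with respect to the coloring at the start of the round), $u$ attempts to force $v$, succeeding with probability $w_{uv}$, all attempts being independent; a white vertex becomes blue at the end of the round if at least one attempt on it succeeds. $B$ is a weighted zero forcing set of $G$ if this process can eventually color all of $V(G)$ blue (equivalently, $B$ is a zero forcing set of the underlying unweighted graph under the standard rule); $\operatorname{Z}(G)$ is the minimum size of such a set. $\operatorname{ptw}(G,B)$ is the random variable giving the round in which the last white vertex becomes blue ($0$ if $B=V(G)$). For $\alpha\in(0,1)$, $\operatorname{cptw}(G,B,\alpha)$ is the least $t\ge 0$ with $\Pr(\operatorname{ptw}(G,B)\le t)\ge\alpha$, and $\operatorname{cptw}(G,\alpha)$ is the minimum of $\operatorname{cptw}(G,B,\alpha)$ over weighted zero forcing sets $B$ with $|B|=\operatorname{Z}(G)$. *)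

theory Defs
  imports "HOL-Probability.Probability"
begin

text \<open>A finite simple graph is given by a finite vertex set V and a symmetric,
irreflexive edge relation E; edge weights are given by a function w (only its
values on edges matter).\<close>

definition zf_step :: "'a set \<Rightarrow> ('a \<Rightarrow> 'a \<Rightarrow> bool) \<Rightarrow> 'a set \<Rightarrow> 'a set" where
  "zf_step V E S = S \<union> {v. \<exists>u\<in>S. {x\<in>V. E u x \<and> x \<notin> S} = {v}}"

definition zero_forcing_set :: "'a set \<Rightarrow> ('a \<Rightarrow> 'a \<Rightarrow> bool) \<Rightarrow> 'a set \<Rightarrow> bool" where
  "zero_forcing_set V E B \<longleftrightarrow> B \<subseteq> V \<and> (\<exists>k. (zf_step V E ^^ k) B = V)"

definition zero_forcing_number :: "'a set \<Rightarrow> ('a \<Rightarrow> 'a \<Rightarrow> bool) \<Rightarrow> nat" where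
  "zero_forcing_number V E = Min {card B | B. zero_forcing_set V E B}"

definition wzf_forcers :: "'a set \<Rightarrow> ('a \<Rightarrow> 'a \<Rightarrow> bool) \<Rightarrow> 'a set \<Rightarrow> 'a \<Rightarrow> 'a set" where
  "wzf_forcers V E S v = {u\<in>S. {x\<in>V. E u x \<and> x \<notin> S} = {v}}"

definition wzf_prob :: "'a set \<Rightarrow> ('a \<Rightarrow> 'a \<Rightarrow> bool) \<Rightarrow> ('a \<Rightarrow> 'a \<Rightarrow> real) \<Rightarrow> 'a set \<Rightarrow> 'a \<Rightarrow> real" where
  "wzf_prob V E w S v = 1 - (\<Prod>u\<in>wzf_forcers V E S v. 1 - w u v)"

text \<open>One round of weighted zero forcing, as a distribution on blue sets.
Different white vertices receive disjoint sets of attempts, so they turn blue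
independently.\<close>
definition wzf_step :: "'a set \<Rightarrow> ('a \<Rightarrow> 'a \<Rightarrow> bool) \<Rightarrow> ('a \<Rightarrow> 'a \<Rightarrow> real) \<Rightarrow> 'a set \<Rightarrow> 'a set pmf" where
  "wzf_step V E w S =
     map_pmf (\<lambda>f. S \<union> {v \<in> V - S. f v})
       (Pi_pmf (V - S) False (\<lambda>v. bernoulli_pmf (wzf_prob V E w S v)))"

primrec wzf_state :: "'a set \<Rightarrow> ('a \<Rightarrow> 'a \<Rightarrow> bool) \<Rightarrow> ('a \<Rightarrow> 'a \<Rightarrow> real) \<Rightarrow> 'a set \<Rightarrow> nat \<Rightarrow> 'a set pmf" where
  "wzf_state V E w B 0 = return_pmf B"
| "wzf_state V E w B (Suc t) = bind_pmf (wzf_state V E w B t) (wzf_step V E w)"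

definition ptw_le_prob :: "'a set \<Rightarrow> ('a \<Rightarrow> 'a \<Rightarrow> bool) \<Rightarrow> ('a \<Rightarrow> 'a \<Rightarrow> real) \<Rightarrow> 'a set \<Rightarrow> nat \<Rightarrow> real" where
  "ptw_le_prob V E w B t = pmf (wzf_state V E w B t) V"

definition cptw_set :: "'a set \<Rightarrow> ('a \<Rightarrow> 'a \<Rightarrow> bool) \<Rightarrow> ('a \<Rightarrow> 'a \<Rightarrow> real) \<Rightarrow> 'a set \<Rightarrow> real \<Rightarrow> nat" where
  "cptw_set V E w B \<alpha> = (LEAST t. ptw_le_prob V E w B t \<ge> \<alpha>)"

definition cptw :: "'a set \<Rightarrow> ('a \<Rightarrow> 'a \<Rightarrow> bool) \<Rightarrow> ('a \<Rightarrow> 'a \<Rightarrow> real) \<Rightarrow> real \<Rightarrow> nat" where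
  "cptw V E w \<alpha> = Min {cptw_set V E w B \<alpha> | B. zero_forcing_set V E B \<and> card B = zero_forcing_number V E}"

text \<open>The star K_{1,n}: centre 0, leaves 1..n; the edge to leaf i has weight p i.\<close>
definition star_V :: "nat \<Rightarrow> nat set" where
  "star_V n = {0..n}"

definition star_E :: "nat \<Rightarrow> nat \<Rightarrow> nat \<Rightarrow> bool" where
  "star_E n u v \<longleftrightarrow> (u = 0 \<and> v \<in> {1..n}) \<or> (v = 0 \<and> u \<in> {1..n})"

definition star_w :: "(nat \<Rightarrow> real) \<Rightarrow> nat \<Rightarrow> nat \<Rightarrow> real" where
  "star_w p u v = p (max u v)"

end

theory Submission
  imports Defs
begin

text \<open>Starting from an optimal zero forcing set of the star, i.e. all leaves but one leaf k,
the weighted process runs in two stages: each round the centre turns blue with probability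
1 - Q_k, where Q_k is the product of 1 - p_u over the blue leaves, and afterwards leaf k turns blue
with probability p_k each round. So Pr(ptw \<le> t) = 1 - T(Q_k, 1 - p_k, t), where T(x, y, t) is
the tail of a sum of two independent geometric waiting times with failure probabilities x and y.
The product Q_k (1 - p_k) does not depend on k, and for a fixed product the tail T is smallest when
x and y are least spread apart; the ordering of the weights makes k = n that choice. Solving the
linear recursion for T in closed form gives the formula.\<close>

section \<open>Two-stage waiting times\<close>

text \<open>hom_sum x y j is the complete homogeneous polynomial of degree j in x and y,
the sum of x^i * y^(j-i) over i \<le> j.\<close>
fun hom_sum :: "real \<Rightarrow> real \<Rightarrow> nat \<Rightarrow> real" where
  "hom_sum x y 0 = 1"
| "hom_sum x y (Suc j) = x ^ Suc j + y * hom_sum x y j"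

text \<open>A walker leaves stage one with probability 1 - x per round and then stage two with
probability 1 - y per round. It is in stage two after t rounds with probability
two_stage_mid x y t, and has not finished with probability two_stage_tail x y t.\<close>
fun two_stage_mid :: "real \<Rightarrow> real \<Rightarrow> nat \<Rightarrow> real" where
  "two_stage_mid x y 0 = 0"
| "two_stage_mid x y (Suc t) = (1 - x) * x ^ t + y * two_stage_mid x y t"

definition two_stage_tail :: "real \<Rightarrow> real \<Rightarrow> nat \<Rightarrow> real" where
  "two_stage_tail x y t = x ^ t + two_stage_mid x y t"

lemma hom_sum_closed_form: "(x - y) * hom_sum x y j = x ^ Suc j - y ^ Suc j"
proof (induction j)
  case (Suc j)
  have "(x - y) * hom_sum x y (Suc j) = (x - y) * x ^ Suc j + y * ((x - y) * hom_sum x y j)"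
    by (simp add: algebra_simps)
  also have "\<dots> = (x - y) * x ^ Suc j + y * (x ^ Suc j - y ^ Suc j)"
    by (simp only: Suc)
  finally show ?case by (simp add: algebra_simps)
qed simp

lemma hom_sum_commute: "hom_sum x y j = hom_sum y x j"
proof (cases "x = y")
  case False
  have "(x - y) * hom_sum x y j = (x - y) * hom_sum y x j"
    using hom_sum_closed_form[of x y j] hom_sum_closed_form[of y x j] by (simp add: algebra_simps)
  then show ?thesis
    using False by simp
qed simp

lemma hom_sum_Suc_Suc: "hom_sum x y (Suc (Suc j)) = x ^ (j + 2) + y ^ (j + 2) + x * y * hom_sum x y j"
proof -
  have "hom_sum x y (Suc j) = y ^ Suc j + x * hom_sum x y j"
    using hom_sum_commute[of x y "Suc j"] hom_sum_commute[of x y j] by simp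
  then show ?thesis by (simp add: algebra_simps)
qed

lemma hom_sum_nonneg: "0 \<le> x \<Longrightarrow> 0 \<le> y \<Longrightarrow> 0 \<le> hom_sum x y j"
  by (induction j) auto

lemma hom_sum_le:
  assumes "0 \<le> x" "x \<le> z" "0 \<le> y" "y \<le> z"
  shows "hom_sum x y j \<le> real (Suc j) * z ^ j"
proof (induction j)
  case (Suc j)
  have "x ^ Suc j \<le> z ^ Suc j"
    using assms by (intro power_mono) auto
  moreover have "y * hom_sum x y j \<le> z * (real (Suc j) * z ^ j)"
    using Suc assms hom_sum_nonneg[of x y j] by (intro mult_mono) auto
  ultimately show ?case by (simp add: algebra_simps)
qed simp

lemma two_stage_mid_Suc: "two_stage_mid x y (Suc t) = (1 - x) * hom_sum x y t"
proof (induction t)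
  case (Suc t)
  then show ?case by (simp only: two_stage_mid.simps(2)[of x y "Suc t"]) (simp add: algebra_simps)
qed simp

lemma two_stage_mid_closed_form: "(x - y) * two_stage_mid x y t = (1 - x) * (x ^ t - y ^ t)"
proof (cases t)
  case (Suc s)
  have "(x - y) * two_stage_mid x y (Suc s) = (1 - x) * ((x - y) * hom_sum x y s)"
    by (simp only: two_stage_mid_Suc ac_simps)
  then show ?thesis
    unfolding Suc hom_sum_closed_form .
qed simp

lemma two_stage_tail_Suc_Suc:
  "two_stage_tail x y (Suc (Suc t)) = hom_sum x y (Suc t) - x * y * hom_sum x y t"
  unfolding two_stage_tail_def two_stage_mid_Suc by (simp add: algebra_simps)

lemma two_stage_tail_commute: "two_stage_tail x y t = two_stage_tail y x t"
proof -
  consider "t = 0" | "t = 1" | s where "t = Suc (Suc s)"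
    by (metis One_nat_def not0_implies_Suc)
  then show ?thesis
  proof cases
    case 3
    then show ?thesis by (simp add: two_stage_tail_Suc_Suc hom_sum_commute mult.commute)
  qed (simp_all add: two_stage_tail_def)
qed

lemma two_stage_tail_nonneg:
  assumes "0 \<le> x" "x \<le> 1" "0 \<le> y"
  shows "0 \<le> two_stage_tail x y t"
proof -
  have "0 \<le> two_stage_mid x y t"
    using assms by (induction t) auto
  then show ?thesis
    using assms by (simp add: two_stage_tail_def)
qed

lemma two_stage_tail_LIMSEQ:
  assumes "0 \<le> x" "x < 1" "0 \<le> y" "y < 1"
  shows "two_stage_tail x y \<longlonglongrightarrow> 0"
proof -
  define z where "z = max x y"
  have z: "0 \<le> z" "z < 1" "x \<le> z" "y \<le> z" using assms by (auto simp: z_def)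
  have "(\<lambda>t. of_nat t * z ^ t + z ^ t) \<longlonglongrightarrow> 0"
    using powser_times_n_limit_0[of z] LIMSEQ_power_zero[of z] z by (auto intro: tendsto_add_zero)
  then have bound: "(\<lambda>t. real (Suc t) * z ^ t) \<longlonglongrightarrow> 0"
    by (simp add: algebra_simps)
  have "two_stage_tail x y (t + 2) \<le> real (Suc (Suc t)) * z ^ Suc t" for t
  proof -
    have "0 \<le> x * y * hom_sum x y t"
      using assms hom_sum_nonneg[of x y t] by simp
    then have "two_stage_tail x y (t + 2) \<le> hom_sum x y (Suc t)"
      using two_stage_tail_Suc_Suc[of x y t] by simp
    also have "\<dots> \<le> real (Suc (Suc t)) * z ^ Suc t"
      using hom_sum_le z assms by blast
    finally show ?thesis .
  qed
  then have "(\<lambda>t. two_stage_tail x y (t + 2)) \<longlonglongrightarrow> 0"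
    using two_stage_tail_nonneg assms
    by (intro tendsto_sandwich[OF _ _ tendsto_const LIMSEQ_Suc[OF bound]]) auto
  then show ?thesis by (rule LIMSEQ_offset)
qed

lemma power_sum_spread_step:
  fixes a b c d :: real
  assumes "0 < b" "b \<le> d" "d \<le> c" "c \<le> a" "a * b = c * d"
  shows "d * (a^k + b^k - c^k - d^k) \<le> a^Suc k + b^Suc k - c^Suc k - d^Suc k"
proof -
  have "d * (b^k * (d - b)) = b^k * d * (d - b)"
    by (simp add: algebra_simps)
  also have "\<dots> \<le> c^k * a * (d - b)"
    using assms by (intro mult_right_mono mult_mono power_mono) auto
  also have "\<dots> = d * (c^k * (a - c))"
    using assms(5) by (simp add: algebra_simps)
  finally have "b^k * (d - b) \<le> c^k * (a - c)"
    using assms by simp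
  moreover have "c^k * (a - d) \<le> a^k * (a - d)"
    using assms by (intro mult_right_mono power_mono) auto
  ultimately show ?thesis by (simp add: algebra_simps)
qed

lemma two_stage_tail_mono_spread:
  fixes a b c d :: real
  assumes "0 < b" "b \<le> d" "d \<le> c" "c \<le> a" "a < 1" "a * b = c * d"
  shows "two_stage_tail c d t \<le> two_stage_tail a b t"
proof -
  txt \<open>With R = a b = c d, the difference of the tails at t + 2 is E (t + 1) - R E t, and
    E (j + 2) = D (j + 2) + R E j links the gaps E of hom_sum to the power-sum gaps D, which grow
    at least by the factor d \<ge> R by power_sum_spread_step.\<close>
  define R where "R = c * d"
  define D where "D k = a^k + b^k - c^k - d^k" for k
  define E where "E j = hom_sum a b j - hom_sum c d j" for j
  have R: "0 \<le> R" "R \<le> d"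
    using assms unfolding R_def by (auto intro: mult_left_le_one_le)
  have D_step: "d * D k \<le> D (Suc k)" for k
    unfolding D_def by (rule power_sum_spread_step[OF assms(1-4,6)])
  have D_nonneg: "0 \<le> D k" for k
  proof (induction k)
    case (Suc k)
    then show ?case
      using D_step[of k] mult_nonneg_nonneg[of d "D k"] assms(1,2) by linarith
  qed (simp add: D_def)
  have D_grow: "R * D k \<le> D (Suc k)" for k
    using D_step[of k] mult_right_mono[OF R(2) D_nonneg[of k]] by linarith
  have E_Suc_Suc: "E (Suc (Suc j)) = D (j + 2) + R * E j" for j
    unfolding E_def D_def R_def hom_sum_Suc_Suc using assms(6) by (simp add: algebra_simps)
  have E_grow: "R * E j \<le> E (Suc j) \<and> R * E (Suc j) \<le> E (Suc (Suc j))" for j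
  proof (induction j)
    case 0
    have "E 1 = D 1" by (simp add: E_def D_def)
    then show ?case
      using E_Suc_Suc[of 0] D_nonneg[of 1] D_grow[of 1] by (simp add: E_def numeral_2_eq_2)
  next
    case (Suc j)
    have "E (Suc (Suc (Suc j))) - R * E (Suc (Suc j))
        = (D (j + 3) - R * D (j + 2)) + R * (E (Suc j) - R * E j)"
      using E_Suc_Suc[of "Suc j"] E_Suc_Suc[of j] by (simp add: algebra_simps eval_nat_numeral)
    moreover have "R * D (j + 2) \<le> D (j + 3)"
      using D_grow[of "j + 2"] by (simp add: eval_nat_numeral)
    moreover have "0 \<le> R * (E (Suc j) - R * E j)"
      using Suc.IH R by simp
    ultimately show ?case using Suc.IH by linarith
  qed
  consider "t = 0" | "t = 1" | s where "t = Suc (Suc s)"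
    by (metis One_nat_def not0_implies_Suc)
  then show ?thesis
  proof cases
    case (3 s)
    have "two_stage_tail a b t - two_stage_tail c d t = E (Suc s) - R * E s"
      unfolding 3 two_stage_tail_Suc_Suc E_def R_def using assms(6) by (simp add: algebra_simps)
    then show ?thesis using E_grow[of s] by simp
  qed (use assms in \<open>simp_all add: two_stage_tail_def\<close>)
qed

lemma two_stage_tail_le_of_between:
  fixes a b c d :: real
  assumes "0 < b" "b \<le> c" "c \<le> a" "a < 1" "a * b = c * d"
  shows "two_stage_tail c d t \<le> two_stage_tail a b t"
proof -
  have "0 < c" "0 < a"
    using assms by linarith+
  have "0 < c * d"
    using assms \<open>0 < a\<close> by (metis mult_pos_pos)
  then have "0 < d"
    using \<open>0 < c\<close> by (simp add: zero_less_mult_iff)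
  have "a * b \<le> a * d"
    using assms \<open>0 < d\<close> by (metis mult_right_mono less_imp_le)
  then have "b \<le> d"
    using \<open>0 < a\<close> by simp
  have "c * d \<le> c * a"
    using assms \<open>0 < a\<close> by (metis mult.commute mult_left_mono less_imp_le)
  then have "d \<le> a"
    using \<open>0 < c\<close> by simp
  show ?thesis
  proof (cases "c \<le> d")
    case True
    have "two_stage_tail d c t \<le> two_stage_tail a b t"
      using assms \<open>d \<le> a\<close> True by (intro two_stage_tail_mono_spread) (simp_all add: mult.commute)
    then show ?thesis by (simp add: two_stage_tail_commute)
  next
    case False
    then show ?thesis
      using assms \<open>b \<le> d\<close> by (intro two_stage_tail_mono_spread) simp_all
  qed
qed

lemma one_minus_two_stage_tail:
  fixes P q :: real
  assumes "0 < q" "P < 1" "P \<noteq> 1 - q"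
  shows "1 - two_stage_tail P (1 - q) m
    = q * (1 - P) * (((1 - P^m) / (1 - P) - (1 - (1 - q)^m) / q) / (P - (1 - q)))"
proof -
  have nz: "P - (1 - q) \<noteq> 0" "1 - P \<noteq> 0" "q \<noteq> 0"
    using assms by auto
  define pm where "pm = P^m"
  define ym where "ym = (1 - q)^m"
  have "two_stage_mid P (1 - q) m = (1 - P) * (pm - ym) / (P - (1 - q))"
    using two_stage_mid_closed_form[of P "1 - q" m] nz by (simp add: field_simps pm_def ym_def)
  then have "1 - two_stage_tail P (1 - q) m
      = ((1 - pm) * (P - (1 - q)) - (1 - P) * (pm - ym)) / (P - (1 - q))"
    using nz by (simp add: two_stage_tail_def pm_def field_simps)
  also have "\<dots> = (q * (1 - pm) - (1 - P) * (1 - ym)) / (P - (1 - q))"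
    by (simp add: algebra_simps)
  also have "\<dots> = q * (1 - P) * (((1 - pm) / (1 - P) - (1 - ym) / q) / (P - (1 - q)))"
  proof -
    have "(1 - pm) / (1 - P) - (1 - ym) / q = (q * (1 - pm) - (1 - P) * (1 - ym)) / ((1 - P) * q)"
      using nz by (simp add: diff_frac_eq algebra_simps)
    then show ?thesis using nz by simp
  qed
  finally show ?thesis by (simp add: pm_def ym_def)
qed

section \<open>Weighted zero forcing\<close>

lemma pmf_map_bernoulli_if:
  assumes "0 \<le> q" "q \<le> 1" "A \<noteq> B"
  shows "pmf (map_pmf (\<lambda>b. if b then A else B) (bernoulli_pmf q)) C
    = (if C = A then q else if C = B then 1 - q else 0)"
  using assms by (simp add: map_pmf_def pmf_bind)

lemma bernoulli_pmf_0: "bernoulli_pmf 0 = return_pmf False"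
  by (intro pmf_eqI) (auto simp: indicator_def)

lemma wzf_step_all_blue: "wzf_step V E w V = return_pmf V"
  unfolding wzf_step_def by simp

lemma wzf_step_one_white:
  assumes "V - S = {v}"
  shows "wzf_step V E w S = map_pmf (\<lambda>b. if b then insert v S else S) (bernoulli_pmf (wzf_prob V E w S v))"
  unfolding wzf_step_def assms Pi_pmf_singleton map_pmf_comp
  by (intro map_pmf_cong) auto

lemma wzf_step_two_white_one_unforced:
  assumes "V - S = {v, u}" "v \<noteq> u" "wzf_prob V E w S u = 0"
  shows "wzf_step V E w S = map_pmf (\<lambda>b. if b then insert v S else S) (bernoulli_pmf (wzf_prob V E w S v))"
proof -
  let ?coin = "\<lambda>x. bernoulli_pmf (wzf_prob V E w S x)"
  have "Pi_pmf {u} False ?coin = return_pmf (\<lambda>_. False)"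
    unfolding Pi_pmf_singleton assms(3) by (simp add: fun_eq_iff bernoulli_pmf_0)
  then have coins: "Pi_pmf {v, u} False ?coin = map_pmf (\<lambda>b. (\<lambda>_. False)(v := b)) (?coin v)"
    using assms(2) by (subst Pi_pmf_insert) (auto simp: pair_return_pmf2 map_pmf_comp)
  then show ?thesis
    unfolding wzf_step_def assms(1) coins map_pmf_comp using assms(2) by (intro map_pmf_cong) auto
qed

lemma ptw_le_prob_two_stage:
  assumes step0: "wzf_step V E w B0 = map_pmf (\<lambda>b. if b then B1 else B0) (bernoulli_pmf (1 - x))"
    and step1: "wzf_step V E w B1 = map_pmf (\<lambda>b. if b then V else B1) (bernoulli_pmf (1 - y))"
    and distinct: "B0 \<noteq> B1" "B0 \<noteq> V" "B1 \<noteq> V"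
    and "0 \<le> x" "x \<le> 1" "0 \<le> y" "y \<le> 1"
  shows "ptw_le_prob V E w B0 t = 1 - two_stage_tail x y t"
proof -
  let ?K = "wzf_step V E w"
  have K0: "pmf (?K B0) C = (if C = B1 then 1 - x else if C = B0 then x else 0)" for C
    unfolding step0 using assms by (simp add: pmf_map_bernoulli_if)
  have K1: "pmf (?K B1) C = (if C = V then 1 - y else if C = B1 then y else 0)" for C
    unfolding step1 using assms by (simp add: pmf_map_bernoulli_if)
  have K2: "pmf (?K V) C = (if C = V then 1 else 0)" for C
    by (simp add: wzf_step_all_blue)
  have closed: "set_pmf (?K a) \<subseteq> {B0, B1, V}" if "a \<in> {B0, B1, V}" for a
    using that step0 step1 by (auto simp: wzf_step_all_blue)
  have "set_pmf (wzf_state V E w B0 t) \<subseteq> {B0, B1, V}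
      \<and> pmf (wzf_state V E w B0 t) B0 = x ^ t
      \<and> pmf (wzf_state V E w B0 t) B1 = two_stage_mid x y t
      \<and> pmf (wzf_state V E w B0 t) V = 1 - two_stage_tail x y t"
  proof (induction t)
    case 0
    then show ?case using distinct by (simp add: two_stage_tail_def)
  next
    case (Suc t)
    let ?M = "wzf_state V E w B0 t"
    have "pmf (wzf_state V E w B0 (Suc t)) C = (\<Sum>a\<in>{B0, B1, V}. pmf (?K a) C * pmf ?M a)" for C
      unfolding wzf_state.simps pmf_bind by (rule integral_measure_pmf_real) (use Suc.IH in auto)
    then have mass: "pmf (wzf_state V E w B0 (Suc t)) C
        = pmf (?K B0) C * x ^ t + pmf (?K B1) C * two_stage_mid x y t
          + pmf (?K V) C * (1 - two_stage_tail x y t)" for C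
      using Suc.IH distinct by (simp add: algebra_simps)
    have "set_pmf (wzf_state V E w B0 (Suc t)) \<subseteq> {B0, B1, V}"
      unfolding wzf_state.simps set_bind_pmf using Suc.IH closed by blast
    moreover have "pmf (wzf_state V E w B0 (Suc t)) B0 = x ^ Suc t"
      using mass[of B0] distinct by (simp add: K0 K1 K2)
    moreover have "pmf (wzf_state V E w B0 (Suc t)) B1 = two_stage_mid x y (Suc t)"
      using mass[of B1] distinct by (simp add: K0 K1 K2 algebra_simps)
    moreover have "pmf (wzf_state V E w B0 (Suc t)) V = 1 - two_stage_tail x y (Suc t)"
      using mass[of V] distinct by (simp add: K0 K1 K2 two_stage_tail_def algebra_simps)
    ultimately show ?case by blast
  qed
  then show ?thesis unfolding ptw_le_prob_def by blast
qed

lemma cptw_set_le: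
  assumes "\<exists>t. \<alpha> \<le> ptw_le_prob V E w B' t"
    and "\<And>t. ptw_le_prob V E w B' t \<le> ptw_le_prob V E w B t"
  shows "cptw_set V E w B \<alpha> \<le> cptw_set V E w B' \<alpha>"
proof -
  have "\<alpha> \<le> ptw_le_prob V E w B' (cptw_set V E w B' \<alpha>)"
    unfolding cptw_set_def using assms(1) by (rule LeastI_ex)
  then have "\<alpha> \<le> ptw_le_prob V E w B (cptw_set V E w B' \<alpha>)"
    using assms(2) order_trans by blast
  then show ?thesis
    unfolding cptw_set_def by (rule Least_le)
qed

lemma cptw_eqI:
  assumes "finite V" "zero_forcing_set V E B" "card B = zero_forcing_number V E"
    and "\<And>B'. zero_forcing_set V E B' \<Longrightarrow> card B' = zero_forcing_number V E
      \<Longrightarrow> cptw_set V E w B \<alpha> \<le> cptw_set V E w B' \<alpha>"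
  shows "cptw V E w \<alpha> = cptw_set V E w B \<alpha>"
  unfolding cptw_def
proof (rule Min_eqI)
  have "{cptw_set V E w B' \<alpha> |B'. zero_forcing_set V E B' \<and> card B' = zero_forcing_number V E}
      \<subseteq> (\<lambda>B'. cptw_set V E w B' \<alpha>) ` Pow V"
    by (auto simp: zero_forcing_set_def)
  then show "finite {cptw_set V E w B' \<alpha> |B'. zero_forcing_set V E B' \<and> card B' = zero_forcing_number V E}"
    by (rule finite_subset) (simp add: assms(1))
qed (use assms in auto)

section \<open>The weighted star\<close>

lemma prod_le_factor:
  fixes f :: "'a \<Rightarrow> 'b::linordered_semidom"
  assumes "finite A" "j \<in> A" "\<And>i. i \<in> A \<Longrightarrow> 0 \<le> f i \<and> f i \<le> 1"
  shows "prod f A \<le> f j"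
proof -
  have "prod f A = f j * prod f (A - {j})"
    using assms by (simp add: prod.remove)
  also have "\<dots> \<le> f j"
    using assms by (intro mult_left_le prod_le_1) auto
  finally show ?thesis .
qed

lemma star_white_neighbours_leaf:
  assumes "u \<in> {1..n}"
  shows "{x \<in> star_V n. star_E n u x \<and> x \<notin> S} = {0} - S"
  using assms by (auto simp: star_V_def star_E_def)

lemma star_white_neighbours_centre: "{x \<in> star_V n. star_E n 0 x \<and> x \<notin> S} = {1..n} - S"
  by (auto simp: star_V_def star_E_def)

lemma star_wzf_forcers_leaves:
  assumes "S \<subseteq> {1..n}"
  shows "wzf_forcers (star_V n) (star_E n) S v = (if v = 0 then S else {})"
proof -
  have "{x \<in> star_V n. star_E n u x \<and> x \<notin> S} = {0}" if "u \<in> S" for u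
  proof -
    have u: "u \<in> {1..n}" and "0 \<notin> S"
      using that assms by auto
    then show ?thesis
      unfolding star_white_neighbours_leaf[OF u] by auto
  qed
  then show ?thesis
    unfolding wzf_forcers_def by auto
qed

lemma star_wzf_forcers_centre:
  assumes "S \<subseteq> {1..n}" "{1..n} - S = {k}"
  shows "wzf_forcers (star_V n) (star_E n) (insert 0 S) v = (if v = k then {0} else {})"
proof -
  have "{x \<in> star_V n. star_E n 0 x \<and> x \<notin> insert 0 S} = {k}"
    using assms(2) unfolding star_white_neighbours_centre by auto
  moreover have "{x \<in> star_V n. star_E n u x \<and> x \<notin> insert 0 S} = {}" if "u \<in> S" for u
  proof -
    have u: "u \<in> {1..n}"
      using that assms(1) by auto
    show ?thesis
      unfolding star_white_neighbours_leaf[OF u] by auto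
  qed
  ultimately show ?thesis
    unfolding wzf_forcers_def by auto
qed

lemma zf_step_eq_forcers: "zf_step V E S = S \<union> {v. wzf_forcers V E S v \<noteq> {}}"
  unfolding zf_step_def wzf_forcers_def by auto

lemma star_zf_step_keeps_two_white_leaves:
  assumes "a \<in> {1..n}" "b \<in> {1..n}" "a \<noteq> b" "a \<notin> S" "b \<notin> S"
  shows "a \<notin> zf_step (star_V n) (star_E n) S"
proof
  assume "a \<in> zf_step (star_V n) (star_E n) S"
  then obtain u where "u \<in> S" and white: "{x \<in> star_V n. star_E n u x \<and> x \<notin> S} = {a}"
    using assms(4) unfolding zf_step_def by blast
  then have "star_E n u a"
    by blast
  then have "u = 0"
    using assms(1) by (auto simp: star_E_def)
  then have "b \<in> {x \<in> star_V n. star_E n u x \<and> x \<notin> S}"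
    using assms(2,5) by (auto simp: star_V_def star_E_def)
  then show False
    using white assms(3) by (metis singletonD)
qed

lemma star_zero_forcing_set_white_leaves:
  assumes "zero_forcing_set (star_V n) (star_E n) B"
  shows "card ({1..n} - B) \<le> 1"
proof (rule ccontr)
  assume "\<not> card ({1..n} - B) \<le> 1"
  then obtain a b where ab: "a \<in> {1..n} - B" "b \<in> {1..n} - B" "a \<noteq> b"
    using card_le_Suc0_iff_eq[of "{1..n} - B"] by auto
  have stay_white: "a \<notin> (zf_step (star_V n) (star_E n) ^^ j) B \<and> b \<notin> (zf_step (star_V n) (star_E n) ^^ j) B" for j
    by (induction j) (use ab star_zf_step_keeps_two_white_leaves in auto)
  obtain j where "(zf_step (star_V n) (star_E n) ^^ j) B = star_V n"
    using assms unfolding zero_forcing_set_def by blast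
  then show False
    using stay_white[of j] ab by (auto simp: star_V_def)
qed

lemma star_zero_forcing_set_card:
  assumes "1 \<le> n" "zero_forcing_set (star_V n) (star_E n) B"
  shows "n - 1 \<le> card B" and "card B = n - 1 \<Longrightarrow> \<exists>k\<in>{1..n}. B = {1..n} - {k}"
proof -
  have "B \<subseteq> {0..n}"
    using assms(2) by (simp add: zero_forcing_set_def star_V_def)
  then have B: "B \<subseteq> {0..n}" "finite B"
    using finite_subset by auto
  have white: "card ({1..n} - B) \<le> 1"
    using star_zero_forcing_set_white_leaves[OF assms(2)] .
  have split: "card (B \<inter> {1..n}) + card ({1..n} - B) = n"
  proof -
    have "card ((B \<inter> {1..n}) \<union> ({1..n} - B)) = card (B \<inter> {1..n}) + card ({1..n} - B)"
      by (rule card_Un_disjoint) auto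
    moreover have "(B \<inter> {1..n}) \<union> ({1..n} - B) = {1..n}"
      by auto
    ultimately show ?thesis
      by simp
  qed
  have leaves: "card (B \<inter> {1..n}) \<le> card B"
    using B by (intro card_mono) auto
  then show "n - 1 \<le> card B"
    using white split by linarith
  assume card: "card B = n - 1"
  have "0 \<notin> B"
  proof
    assume "0 \<in> B"
    then have "card (insert 0 (B \<inter> {1..n})) \<le> card B"
      using B by (intro card_mono) auto
    then show False
      using white split card by simp
  qed
  have "B \<subseteq> {1..n}"
  proof
    fix x
    assume "x \<in> B"
    then show "x \<in> {1..n}"
      using B(1) \<open>0 \<notin> B\<close> by (cases x) auto
  qed
  then have "card ({1..n} - B) = 1"
    using white split card assms(1) Int_absorb2[OF \<open>B \<subseteq> {1..n}\<close>] by simp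
  then obtain k where k: "{1..n} - B = {k}"
    using card_1_singletonE by blast
  then show "\<exists>k\<in>{1..n}. B = {1..n} - {k}"
    using \<open>B \<subseteq> {1..n}\<close> by (intro bexI[of _ k]) auto
qed

lemma star_zero_forcing_set_leaves_but_one:
  assumes "2 \<le> n" "k \<in> {1..n}"
  shows "zero_forcing_set (star_V n) (star_E n) ({1..n} - {k})"
proof -
  let ?S = "{1..n} - {k}"
  have "(if k = 1 then 2 else 1) \<in> ?S"
    using assms by auto
  then have "?S \<noteq> {}"
    by blast
  have "{v. wzf_forcers (star_V n) (star_E n) ?S v \<noteq> {}} = {0}"
    unfolding star_wzf_forcers_leaves[OF Diff_subset] using \<open>?S \<noteq> {}\<close> by simp
  then have centre_forced: "zf_step (star_V n) (star_E n) ?S = insert 0 ?S"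
    unfolding zf_step_eq_forcers by simp
  have last_leaf: "{1..n} - ?S = {k}"
    using assms(2) by auto
  have "{v. wzf_forcers (star_V n) (star_E n) (insert 0 ?S) v \<noteq> {}} = {k}"
    unfolding star_wzf_forcers_centre[OF Diff_subset last_leaf] by auto
  then have "zf_step (star_V n) (star_E n) (insert 0 ?S) = star_V n"
    unfolding zf_step_eq_forcers using assms(2) by (auto simp: star_V_def)
  then have "(zf_step (star_V n) (star_E n) ^^ 2) ?S = star_V n"
    using centre_forced by (simp add: numeral_2_eq_2)
  then show ?thesis
    unfolding zero_forcing_set_def by (auto simp: star_V_def)
qed

lemma star_zero_forcing_number:
  assumes "2 \<le> n"
  shows "zero_forcing_number (star_V n) (star_E n) = n - 1"
  unfolding zero_forcing_number_def
proof (rule Min_eqI)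
  have "{card B |B. zero_forcing_set (star_V n) (star_E n) B} \<subseteq> card ` Pow (star_V n)"
    by (auto simp: zero_forcing_set_def)
  then show "finite {card B |B. zero_forcing_set (star_V n) (star_E n) B}"
    by (rule finite_subset) (simp add: star_V_def)
  have "card ({1..n} - {1}) = n - 1"
    using assms by (simp add: card_Diff_singleton)
  then show "n - 1 \<in> {card B |B. zero_forcing_set (star_V n) (star_E n) B}"
    using star_zero_forcing_set_leaves_but_one[OF assms, of 1] assms by force
qed (use star_zero_forcing_set_card(1) assms in force)

lemma star_optimal_zero_forcing_set_iff:
  assumes "2 \<le> n"
  shows "zero_forcing_set (star_V n) (star_E n) B \<and> card B = zero_forcing_number (star_V n) (star_E n)
    \<longleftrightarrow> (\<exists>k\<in>{1..n}. B = {1..n} - {k})"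
  unfolding star_zero_forcing_number[OF assms]
  using star_zero_forcing_set_card(2)[of n B] star_zero_forcing_set_leaves_but_one[OF assms] assms
  by auto

text \<open>The probability that the centre stays white in a round in which every leaf except k is
blue.\<close>
definition centre_miss :: "(nat \<Rightarrow> real) \<Rightarrow> nat \<Rightarrow> nat \<Rightarrow> real" where
  "centre_miss p n k = (\<Prod>u\<in>{1..n} - {k}. 1 - p u)"

lemma centre_miss_pos:
  assumes "\<forall>i\<in>{1..n}. 0 < p i \<and> p i < 1"
  shows "0 < centre_miss p n k"
  unfolding centre_miss_def using assms by (auto intro!: prod_pos)

lemma centre_miss_le:
  assumes "\<forall>i\<in>{1..n}. 0 < p i \<and> p i < 1" "j \<in> {1..n}" "j \<noteq> k"
  shows "centre_miss p n k \<le> 1 - p j"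
  unfolding centre_miss_def using assms
  by (intro prod_le_factor) (auto simp: less_imp_le)

lemma centre_miss_less_1:
  assumes "\<forall>i\<in>{1..n}. 0 < p i \<and> p i < 1" "j \<in> {1..n}" "j \<noteq> k"
  shows "centre_miss p n k < 1"
proof -
  have "0 < p j"
    using assms(1,2) by auto
  then show ?thesis
    using centre_miss_le[OF assms] by linarith
qed

lemma centre_miss_mult:
  assumes "k \<in> {1..n}"
  shows "(1 - p k) * centre_miss p n k = (\<Prod>u\<in>{1..n}. 1 - p u)"
  unfolding centre_miss_def using assms by (simp add: prod.remove)

lemma star_ptw_le_prob:
  assumes "\<forall>i\<in>{1..n}. 0 < p i \<and> p i < 1" "k \<in> {1..n}"
  shows "ptw_le_prob (star_V n) (star_E n) (star_w p) ({1..n} - {k}) t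
    = 1 - two_stage_tail (centre_miss p n k) (1 - p k) t"
proof -
  let ?V = "star_V n" and ?E = "star_E n" and ?w = "star_w p"
  let ?S = "{1..n} - {k}"
  have "{1..n} - ?S = {k}"
    using assms(2) by auto
  then have forcers_centre: "wzf_forcers ?V ?E (insert 0 ?S) k = {0}"
    using star_wzf_forcers_centre[of ?S n k k] by simp
  have "k \<noteq> 0"
    using assms(2) by auto
  then have forcers: "wzf_forcers ?V ?E ?S 0 = ?S" "wzf_forcers ?V ?E ?S k = {}"
    using star_wzf_forcers_leaves[of ?S n 0] star_wzf_forcers_leaves[of ?S n k] by auto
  then have "wzf_prob ?V ?E ?w ?S 0 = 1 - centre_miss p n k" "wzf_prob ?V ?E ?w ?S k = 0"
    unfolding wzf_prob_def by (simp_all add: centre_miss_def star_w_def)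
  moreover have "?V - ?S = {0, k}"
    using assms(2) by (auto simp: star_V_def)
  ultimately have step0: "wzf_step ?V ?E ?w ?S
      = map_pmf (\<lambda>b. if b then insert 0 ?S else ?S) (bernoulli_pmf (1 - centre_miss p n k))"
    using wzf_step_two_white_one_unforced[of ?V ?S 0 k] \<open>k \<noteq> 0\<close> by simp
  have "?V - insert 0 ?S = {k}"
    using assms(2) by (auto simp: star_V_def)
  then have step: "wzf_step ?V ?E ?w (insert 0 ?S)
      = map_pmf (\<lambda>b. if b then insert k (insert 0 ?S) else insert 0 ?S)
          (bernoulli_pmf (wzf_prob ?V ?E ?w (insert 0 ?S) k))"
    by (rule wzf_step_one_white)
  have all_blue: "insert k (insert 0 ?S) = ?V"
    using assms(2) by (auto simp: star_V_def)
  have prob: "wzf_prob ?V ?E ?w (insert 0 ?S) k = 1 - (1 - p k)"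
    unfolding wzf_prob_def forcers_centre by (simp add: star_w_def)
  have step1: "wzf_step ?V ?E ?w (insert 0 ?S)
      = map_pmf (\<lambda>b. if b then ?V else insert 0 ?S) (bernoulli_pmf (1 - (1 - p k)))"
    using step unfolding all_blue prob .
  have "0 \<notin> ?S" "k \<notin> insert 0 ?S" "k \<in> ?V"
    using assms(2) by (auto simp: star_V_def)
  then have "?S \<noteq> insert 0 ?S" "?S \<noteq> ?V" "insert 0 ?S \<noteq> ?V"
    by blast+
  moreover have "0 \<le> centre_miss p n k" "centre_miss p n k \<le> 1"
    using assms(1) unfolding centre_miss_def by (auto intro!: prod_nonneg prod_le_1 simp: less_imp_le)
  moreover have "0 < p k" "p k < 1"
    using assms by auto
  ultimately show ?thesis
    by (intro ptw_le_prob_two_stage[OF step0 step1]) auto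
qed

lemma star_ptw_le_prob_reaches:
  assumes "2 \<le> n" "\<forall>i\<in>{1..n}. 0 < p i \<and> p i < 1" "k \<in> {1..n}" "\<alpha> < 1"
  shows "\<exists>t. \<alpha> \<le> ptw_le_prob (star_V n) (star_E n) (star_w p) ({1..n} - {k}) t"
proof -
  define j where "j = (if k = 1 then 2 else 1 :: nat)"
  have j: "j \<in> {1..n}" "j \<noteq> k"
    using assms by (auto simp: j_def)
  have "centre_miss p n k < 1"
    using assms(2) j by (rule centre_miss_less_1)
  moreover have "0 < centre_miss p n k" "0 < p k" "p k < 1"
    using centre_miss_pos[OF assms(2)] assms(2,3) by auto
  ultimately have "two_stage_tail (centre_miss p n k) (1 - p k) \<longlonglongrightarrow> 0"
    by (intro two_stage_tail_LIMSEQ) auto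
  then have "\<forall>\<^sub>F t in sequentially. two_stage_tail (centre_miss p n k) (1 - p k) t < 1 - \<alpha>"
    using assms(4) by (intro order_tendstoD) auto
  then obtain t where "two_stage_tail (centre_miss p n k) (1 - p k) t < 1 - \<alpha>"
    by (auto simp: eventually_sequentially)
  then have "\<alpha> \<le> ptw_le_prob (star_V n) (star_E n) (star_w p) ({1..n} - {k}) t"
    unfolding star_ptw_le_prob[OF assms(2,3)] by simp
  then show ?thesis ..
qed

lemma star_two_stage_tail_heaviest_le:
  assumes "\<forall>i\<in>{1..n}. 0 < p i \<and> p i < 1"
    and "\<forall>i j. 1 \<le> i \<and> i \<le> j \<and> j \<le> n \<longrightarrow> p i \<le> p j"
    and "k \<in> {1..n}"
  shows "two_stage_tail (centre_miss p n n) (1 - p n) t \<le> two_stage_tail (centre_miss p n k) (1 - p k) t"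
proof (cases "k = n")
  case False
  txt \<open>1 - p n lies between centre_miss p n k and 1 - p k, and both pairs have the same product.\<close>
  have n: "n \<in> {1..n}"
    using assms(3) by auto
  have "two_stage_tail (1 - p n) (centre_miss p n n) t \<le> two_stage_tail (1 - p k) (centre_miss p n k) t"
  proof (rule two_stage_tail_le_of_between)
    show "0 < centre_miss p n k"
      using assms(1) by (rule centre_miss_pos)
    show "centre_miss p n k \<le> 1 - p n"
      using assms(1) n False by (intro centre_miss_le) auto
    show "1 - p n \<le> 1 - p k" "1 - p k < 1"
      using assms by auto
    show "(1 - p k) * centre_miss p n k = (1 - p n) * centre_miss p n n"
      using centre_miss_mult assms(3) n by metis
  qed
  then show ?thesis
    by (simp add: two_stage_tail_commute)
qed simp

lemma one_minus_two_stage_tail_ge_iff: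
  fixes P q \<alpha> :: real
  assumes "0 < q" "P < 1" "P \<noteq> 1 - q" "0 < \<alpha>"
  shows "\<alpha> \<le> 1 - two_stage_tail P (1 - q) m \<longleftrightarrow>
    0 < m \<and> q * (1 - P) * (((1 - P ^ m) / (1 - P) - (1 - (1 - q) ^ m) / q) / (P - (1 - q))) \<ge> \<alpha>"
proof (cases "m = 0")
  case True
  then show ?thesis
    using assms(4) by (simp add: two_stage_tail_def)
qed (simp add: one_minus_two_stage_tail[OF assms(1-3)])

lemma star_cptw:
  assumes "2 \<le> n"
    and "\<forall>i\<in>{1..n}. 0 < p i \<and> p i < 1"
    and "\<forall>i j. 1 \<le> i \<and> i \<le> j \<and> j \<le> n \<longrightarrow> p i \<le> p j"
    and "\<alpha> < 1"
  shows "cptw (star_V n) (star_E n) (star_w p) \<alpha>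
    = (LEAST t. \<alpha> \<le> 1 - two_stage_tail (centre_miss p n n) (1 - p n) t)"
proof -
  have n: "n \<in> {1..n}"
    using assms(1) by auto
  have "cptw (star_V n) (star_E n) (star_w p) \<alpha> = cptw_set (star_V n) (star_E n) (star_w p) ({1..n} - {n}) \<alpha>"
  proof (rule cptw_eqI)
    show "finite (star_V n)"
      by (simp add: star_V_def)
    show "zero_forcing_set (star_V n) (star_E n) ({1..n} - {n})"
      using assms(1) n by (rule star_zero_forcing_set_leaves_but_one)
    show "card ({1..n} - {n}) = zero_forcing_number (star_V n) (star_E n)"
      unfolding star_zero_forcing_number[OF assms(1)] using n by (simp add: card_Diff_singleton)
  next
    fix B
    assume "zero_forcing_set (star_V n) (star_E n) B" "card B = zero_forcing_number (star_V n) (star_E n)"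
    then obtain k where k: "k \<in> {1..n}" and B: "B = {1..n} - {k}"
      using star_optimal_zero_forcing_set_iff[OF assms(1)] by blast
    show "cptw_set (star_V n) (star_E n) (star_w p) ({1..n} - {n}) \<alpha> \<le> cptw_set (star_V n) (star_E n) (star_w p) B \<alpha>"
      unfolding B
      by (rule cptw_set_le[OF star_ptw_le_prob_reaches[OF assms(1,2) k assms(4)]])
        (unfold star_ptw_le_prob[OF assms(2) k] star_ptw_le_prob[OF assms(2) n],
          use star_two_stage_tail_heaviest_le[OF assms(2,3) k] in simp)
  qed
  then show ?thesis
    unfolding cptw_set_def star_ptw_le_prob[OF assms(2) n] .
qed

theorem mainTheorem8:
  fixes n :: nat and p :: "nat \<Rightarrow> real" and \<alpha> :: real
  assumes "n \<ge> 2"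
    and "\<forall>i\<in>{1..n}. 0 < p i \<and> p i < 1"
    and "\<forall>i j. 1 \<le> i \<and> i \<le> j \<and> j \<le> n \<longrightarrow> p i \<le> p j"
    and "0 < \<alpha>" and "\<alpha> < 1"
    and "(\<Prod>j=1..n-1. 1 - p j) \<noteq> 1 - p n"
  shows "cptw (star_V n) (star_E n) (star_w p) \<alpha> =
    (let P = (\<Prod>j=1..n-1. 1 - p j) in
     LEAST m::nat. 0 < m \<and>
       p n * (1 - P) * (((1 - P ^ m) / (1 - P) - (1 - (1 - p n) ^ m) / p n) / (P - (1 - p n))) \<ge> \<alpha>)"
proof -
  have "1 \<in> {1..n}" "1 \<noteq> n" "0 < p n"
    using assms(1,2) by auto
  have P: "centre_miss p n n = (\<Prod>j=1..n-1. 1 - p j)"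
    unfolding centre_miss_def using assms(1) by (intro prod.cong) auto
  have "centre_miss p n n < 1"
    using assms(2) \<open>1 \<in> {1..n}\<close> \<open>1 \<noteq> n\<close> by (rule centre_miss_less_1)
  then show ?thesis
    unfolding star_cptw[OF assms(1-3,5)] Let_def
    using one_minus_two_stage_tail_ge_iff[of "p n" "centre_miss p n n" \<alpha>] \<open>0 < p n\<close> assms(4,6)
    by (simp add: P)
qed

end
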